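(* Let $\pi\in\mathsf{G}_{r,n}$ and let $\text{A-code}(\pi)=(c_1^{[e_1]},c_2^{[e_2]},\dots,c_n^{[e_n]})$. Then $$\ell(\pi)=\sum_{i=1}^n\Bigl(i-c_i+\chi(e_i>0)\cdot\bigl(2(c_i-1)+e_i\bigr)\Bigr),$$ where $\chi(A)=1$ if $A$ holds and $0$ otherwise.
   Context: $\mathsf{G}_{r,n}=C_r\wr\mathfrak S_n$: pairs $(\sigma,\mathbf z)$, $\sigma\in\mathfrak S_n$, $\mathbf z\in(\mathbb Z/r\mathbb Z)^n$, written as words $\sigma_1^{[z_1]}\cdots\sigma_n^{[z_n]}$ (base values $\sigma_i$, colors $z_i\in\{0,\dots,r-1\}$), with product $(\sigma,\mathbf z)(\rho,\mathbf w)=(\sigma\rho,\mathbf w+\rho(\mathbf z))$, $\rho(\mathbf z)=(z_{\rho(1)},\dots,z_{\rho(n)})$. $\ell(\pi)$ is the minimal number of factors needed to write $\pi$ as a product of $s_0=1^{[1]}2\cdots n$ and $s_1,\dots,s_{n-1}$, where $s_i$ has base permutation $(i\ i+1)$ and all colors $0$. A-code: set $\pi^{(n)}=\pi$; for $j=n,n-1,\dots,1$, if the letter with base value $j$ sits at position $p$ of the word $\pi^{(j)}$ and has color $t$, put $c_j=p$, $e_j=t$, and let $\pi^{(j-1)}$ be obtained from $\pi^{(j)}$ by deleting this letter. Then $\text{A-code}(\pi)=(c_1^{[e_1]},\dots,c_n^{[e_n]})$. *)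

theory Defs
  imports Main
begin

text \<open>Colored permutations of G_{r,n} = C_r wr S_n are represented as words:
  lists of letters (base value, color). Position i (1-based) of the list holds
  the letter sigma_i^[z_i].\<close>

type_synonym cword = "(nat \<times> nat) list"

definition G :: "nat \<Rightarrow> nat \<Rightarrow> cword set" where
  "G r n = {w. length w = n \<and> distinct (map fst w) \<and> set (map fst w) = {1..n}
              \<and> (\<forall>x\<in>set w. snd x < r)}"

text \<open>Product (sigma,z)(rho,w) = (sigma rho, w + rho(z)), with rho(z)_i = z_{rho(i)}.\<close>
definition cmult :: "nat \<Rightarrow> cword \<Rightarrow> cword \<Rightarrow> cword" where
  "cmult r a b = map (\<lambda>y. (fst (a ! (fst y - 1)), (snd y + snd (a ! (fst y - 1))) mod r)) b"

definition cid :: "nat \<Rightarrow> cword" where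
  "cid n = map (\<lambda>k. (k, 0)) [1..<n+1]"

definition gen0 :: "nat \<Rightarrow> nat \<Rightarrow> cword" where
  "gen0 r n = map (\<lambda>k. (k, if k = 1 then 1 mod r else 0)) [1..<n+1]"

definition geni :: "nat \<Rightarrow> nat \<Rightarrow> cword" where
  "geni n i = map (\<lambda>k. (if k = i then i + 1 else if k = i + 1 then i else k, 0)) [1..<n+1]"

definition gens :: "nat \<Rightarrow> nat \<Rightarrow> cword set" where
  "gens r n = {gen0 r n} \<union> {geni n i | i. 1 \<le> i \<and> i < n}"

definition clen :: "nat \<Rightarrow> nat \<Rightarrow> cword \<Rightarrow> nat" where
  "clen r n w = (LEAST k. \<exists>gs. length gs = k \<and> set gs \<subseteq> gens r n
                               \<and> foldr (cmult r) gs (cid n) = w)"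

text \<open>A-code. acode_aux j w returns [(c_1,e_1),...,(c_j,e_j)] for the word w = pi^(j):
  the letter with base value j sits at (1-based) position c_j with color e_j and is deleted.\<close>
fun acode_aux :: "nat \<Rightarrow> cword \<Rightarrow> (nat \<times> nat) list" where
  "acode_aux 0 w = []"
| "acode_aux (Suc j) w =
     (let p = length (takeWhile (\<lambda>x. fst x \<noteq> Suc j) w) + 1;
          t = snd (w ! (p - 1))
      in acode_aux j (filter (\<lambda>x. fst x \<noteq> Suc j) w) @ [(p, t)])"

definition acode :: "cword \<Rightarrow> (nat \<times> nat) list" where
  "acode w = acode_aux (length w) w"

end

theory Submission
  imports Defs
begin

text \<open>Write \<open>L(\<pi>)\<close> for the right-hand side. Its summand for the value \<open>v\<close> only depends on the
  number \<open>c\<^sub>v - 1\<close> of smaller values to the left of \<open>v\<close> and on the color of \<open>v\<close>.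
  Left multiplication by \<open>s\<^sub>i\<close> (\<open>i \<ge> 1\<close>) exchanges the values \<open>i\<close> and \<open>i + 1\<close>, which
  changes \<open>L\<close> by \<open>\<plusminus>1\<close>, and left multiplication by \<open>s\<^sub>0\<close> raises the color of the value 1
  modulo \<open>r\<close>, which raises \<open>L\<close> by at most 1. Since \<open>L(id) = 0\<close>, we get \<open>L(\<pi>) \<le> \<ell>(\<pi>)\<close>.
  Conversely, if \<open>\<pi> \<noteq> id\<close> then some generator lowers \<open>L\<close> by exactly one: \<open>s\<^sub>0\<close> if 1 has
  a nonzero color, and otherwise some \<open>s\<^sub>i\<close>; if none does, all colors vanish and the values
  occur in increasing order. Induction on \<open>L\<close> then yields a factorization of length \<open>L(\<pi>)\<close>.\<close>

lemma takeWhile_filter_commute: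
  "(\<And>x. \<not> Q x \<Longrightarrow> P x) \<Longrightarrow> takeWhile P (filter Q xs) = filter Q (takeWhile P xs)"
  by (induction xs) auto

lemma dropWhile_filter_commute:
  "(\<And>x. \<not> Q x \<Longrightarrow> P x) \<Longrightarrow> dropWhile P (filter Q xs) = filter Q (dropWhile P xs)"
  by (induction xs) auto

lemma G_D:
  assumes "w \<in> G r n"
  shows "length w = n" "distinct (map fst w)" "fst ` set w = {1..n}" "\<And>x. x \<in> set w \<Longrightarrow> snd x < r"
  using assms unfolding G_def by auto

lemma G_I:
  assumes "length w = n" "distinct (map fst w)" "fst ` set w = {1..n}" "\<And>x. x \<in> set w \<Longrightarrow> snd x < r"
  shows "w \<in> G r n"
  using assms unfolding G_def by auto

section \<open>Positions of values in a word\<close>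

text \<open>Positions are 0-based, and \<open>position v w = length w\<close> when \<open>v\<close> does not occur in \<open>w\<close>.\<close>

definition position :: "nat \<Rightarrow> cword \<Rightarrow> nat" where
  "position v w = length (takeWhile (\<lambda>x. fst x \<noteq> v) w)"

definition color :: "nat \<Rightarrow> cword \<Rightarrow> nat" where
  "color v w = snd (w ! position v w)"

text \<open>Deleting the values larger than \<open>v\<close>, as the A-code does, leaves exactly the letters
  counted here to the left of \<open>v\<close>; so this is \<open>c\<^sub>v - 1\<close>.\<close>

definition smaller_before :: "nat \<Rightarrow> cword \<Rightarrow> nat" where
  "smaller_before v w = length (filter (\<lambda>x. fst x < v) (takeWhile (\<lambda>x. fst x \<noteq> v) w))"

lemma position_le_length: "position v w \<le> length w"
  unfolding position_def by (rule length_takeWhile_le)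

lemma position_less_length: "v \<in> fst ` set w \<Longrightarrow> position v w < length w"
  unfolding position_def by (induction w) auto

lemma fst_nth_position: "v \<in> fst ` set w \<Longrightarrow> fst (w ! position v w) = v"
  unfolding position_def by (induction w) auto

lemma fst_nth_before_position: "j < position v w \<Longrightarrow> fst (w ! j) \<noteq> v"
proof -
  assume "j < position v w"
  then have "takeWhile (\<lambda>x. fst x \<noteq> v) w ! j \<in> set (takeWhile (\<lambda>x. fst x \<noteq> v) w)"
    unfolding position_def by (rule nth_mem)
  with \<open>j < position v w\<close> show ?thesis
    unfolding position_def by (auto simp: takeWhile_nth dest: set_takeWhileD)
qed

lemma position_fst_nth:
  assumes "distinct (map fst w)" "j < length w"
  shows "position (fst (w ! j)) w = j"
proof -
  have "fst (w ! position (fst (w ! j)) w) = fst (w ! j)"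
    using assms(2) by (intro fst_nth_position) auto
  moreover have "position (fst (w ! j)) w < length w"
    using assms(2) by (intro position_less_length) auto
  moreover have "\<not> j < position (fst (w ! j)) w"
    using fst_nth_before_position by blast
  ultimately show ?thesis
    using assms nth_eq_iff_index_eq[of "map fst w"] by fastforce
qed

lemma fst_nth_eq_iff_position:
  assumes "distinct (map fst w)" "v \<in> fst ` set w" "j < length w"
  shows "fst (w ! j) = v \<longleftrightarrow> j = position v w"
  using position_fst_nth[OF assms(1,3)] fst_nth_position[OF assms(2)] by auto

lemma color_fst:
  assumes "distinct (map fst w)" "x \<in> set w"
  shows "color (fst x) w = snd x"
proof -
  obtain j where "j < length w" "x = w ! j"
    using assms(2) by (auto simp: in_set_conv_nth)
  then show ?thesis
    using position_fst_nth[OF assms(1)] by (simp add: color_def)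
qed

lemma position_map_fst: "position v w = length (takeWhile (\<lambda>a. a \<noteq> v) (map fst w))"
  unfolding position_def by (induction w) auto

lemma position_cong: "map fst w' = map fst w \<Longrightarrow> position v w' = position v w"
  unfolding position_map_fst by simp

lemma smaller_before_map_fst:
  "smaller_before v w = length (filter (\<lambda>a. a < v) (takeWhile (\<lambda>a. a \<noteq> v) (map fst w)))"
  unfolding smaller_before_def by (induction w) auto

lemma smaller_before_cong: "map fst w' = map fst w \<Longrightarrow> smaller_before v w' = smaller_before v w"
  unfolding smaller_before_map_fst by simp

lemma smaller_before_card: "smaller_before v w = card {j. j < position v w \<and> fst (w ! j) < v}"
proof -
  have "smaller_before v w
      = card {j. j < position v w \<and> fst (takeWhile (\<lambda>x. fst x \<noteq> v) w ! j) < v}"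
    unfolding smaller_before_def length_filter_conv_card position_def by simp
  also have "\<dots> = card {j. j < position v w \<and> fst (w ! j) < v}"
    by (rule arg_cong[where f=card]) (auto simp: position_def takeWhile_nth)
  finally show ?thesis .
qed

lemma nth_position_eq_hd_dropWhile:
  "v \<in> fst ` set w \<Longrightarrow> w ! position v w = hd (dropWhile (\<lambda>x. fst x \<noteq> v) w)"
  unfolding position_def by (induction w) auto

lemma card_prefix_with_value:
  assumes "distinct (map fst w)" "v \<in> fst ` set w" "m \<le> length w" "\<not> P v"
  shows "card {j. j < m \<and> (P (fst (w ! j)) \<or> fst (w ! j) = v)}
       = card {j. j < m \<and> P (fst (w ! j))} + (if position v w < m then 1 else 0)"
proof -
  let ?S = "{j. j < m \<and> P (fst (w ! j))}"
  have "{j. j < m \<and> (P (fst (w ! j)) \<or> fst (w ! j) = v)}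
      = ?S \<union> (if position v w < m then {position v w} else {})"
    using assms fst_nth_eq_iff_position[OF assms(1,2)] fst_nth_position[OF assms(2)] by auto
  moreover have "position v w \<notin> ?S"
    using assms(4) fst_nth_position[OF assms(2)] by simp
  ultimately show ?thesis
    by simp
qed

lemma smaller_before_le:
  assumes "w \<in> G r n"
  shows "smaller_before v w \<le> v - 1"
proof -
  let ?xs = "map fst (filter (\<lambda>x. fst x < v) (takeWhile (\<lambda>x. fst x \<noteq> v) w))"
  have "distinct ?xs"
    using G_D(2)[OF assms] by (metis distinct_map_filter takeWhile_eq_take take_map distinct_take)
  moreover have "set ?xs \<subseteq> {1..<v}"
    using G_D(3)[OF assms] by (force dest: set_takeWhileD)
  ultimately have "length ?xs \<le> card {1..<v}"
    by (metis card_mono distinct_card finite_atLeastLessThan)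
  then show ?thesis
    unfolding smaller_before_def by simp
qed

section \<open>The A-code\<close>

lemma smaller_before_filter_larger:
  assumes "v < m"
  shows "smaller_before v (filter (\<lambda>x. fst x \<noteq> m) w) = smaller_before v w"
proof -
  have "smaller_before v (filter (\<lambda>x. fst x \<noteq> m) w)
      = length (filter (\<lambda>x. fst x < v) (filter (\<lambda>x. fst x \<noteq> m) (takeWhile (\<lambda>x. fst x \<noteq> v) w)))"
    unfolding smaller_before_def using assms by (subst takeWhile_filter_commute) auto
  also have "\<dots> = smaller_before v w"
    unfolding smaller_before_def filter_filter using assms
    by (intro arg_cong[where f=length] filter_cong) auto
  finally show ?thesis .
qed

lemma color_filter_other:
  assumes "v \<in> fst ` set w" "v \<noteq> m"
  shows "color v (filter (\<lambda>x. fst x \<noteq> m) w) = color v w"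
proof -
  let ?P = "\<lambda>x. fst x \<noteq> v" and ?Q = "\<lambda>x. fst x \<noteq> m"
  have "dropWhile ?P w \<noteq> []"
    using assms(1) by (auto simp: dropWhile_eq_Nil_conv)
  then obtain y ys where y: "dropWhile ?P w = y # ys" "fst y = v"
    using hd_dropWhile[of ?P w] by (cases "dropWhile ?P w") auto
  have "v \<in> fst ` set (filter ?Q w)"
    using assms by force
  then have "color v (filter ?Q w) = snd (hd (filter ?Q (dropWhile ?P w)))"
    unfolding color_def using assms(2) by (simp add: nth_position_eq_hd_dropWhile)
      (subst dropWhile_filter_commute, auto)
  also have "\<dots> = color v w"
    unfolding color_def using assms y by (simp add: nth_position_eq_hd_dropWhile)
  finally show ?thesis .
qed

lemma smaller_before_max:
  assumes "\<And>x. x \<in> set w \<Longrightarrow> fst x \<le> m"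
  shows "smaller_before m w = position m w"
proof -
  have "\<forall>x\<in>set (takeWhile (\<lambda>x. fst x \<noteq> m) w). fst x < m"
    using assms by (fastforce dest: set_takeWhileD)
  then show ?thesis
    unfolding smaller_before_def position_def by (simp add: filter_id_conv)
qed

lemma length_acode_aux: "length (acode_aux j w) = j"
  by (induction j arbitrary: w) (simp_all add: Let_def)

lemma acode_aux_nth:
  assumes "distinct (map fst w)" "fst ` set w = {1..j}" "v \<in> {1..j}"
  shows "acode_aux j w ! (v - 1) = (smaller_before v w + 1, color v w)"
  using assms
proof (induction j arbitrary: w v)
  case 0
  then show ?case by simp
next
  case (Suc j)
  define w' where "w' = filter (\<lambda>x. fst x \<noteq> Suc j) w"
  have "fst ` set w' = fst ` set w - {Suc j}"
    unfolding w'_def by auto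
  then have w': "distinct (map fst w')" "fst ` set w' = {1..j}"
    unfolding w'_def using Suc.prems(1,2) by (auto simp: distinct_map_filter)
  have unfold: "acode_aux (Suc j) w = acode_aux j w' @ [(position (Suc j) w + 1, color (Suc j) w)]"
    by (simp add: Let_def w'_def position_def color_def)
  show ?case
  proof (cases "v = Suc j")
    case True
    have "smaller_before (Suc j) w = position (Suc j) w"
      using Suc.prems(2) by (intro smaller_before_max) force
    then show ?thesis
      unfolding unfold using True by (simp add: nth_append length_acode_aux)
  next
    case False
    then have v: "v \<in> {1..j}" "v \<in> fst ` set w"
      using Suc.prems(2,3) by auto
    have "acode_aux j w' ! (v - 1) = (smaller_before v w + 1, color v w)"
      using Suc.IH[OF w' v(1)] False v unfolding w'_def
      by (simp add: smaller_before_filter_larger color_filter_other)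
    then show ?thesis
      unfolding unfold using v(1) by (auto simp: nth_append length_acode_aux)
  qed
qed

lemma acode_nth:
  assumes "w \<in> G r n" "v \<in> {1..n}"
  shows "acode w ! (v - 1) = (smaller_before v w + 1, color v w)"
  unfolding acode_def G_D(1)[OF assms(1)] using G_D(2,3)[OF assms(1)] assms(2) by (rule acode_aux_nth)

definition acode_term :: "nat \<Rightarrow> cword \<Rightarrow> int" where
  "acode_term v w = int v - 1 - int (smaller_before v w)
     + (if 0 < color v w then 2 * int (smaller_before v w) + int (color v w) else 0)"

definition acode_length :: "nat \<Rightarrow> cword \<Rightarrow> int" where
  "acode_length n w = (\<Sum>v=1..n. acode_term v w)"

lemma acode_length_nonneg:
  assumes "w \<in> G r n"
  shows "0 \<le> acode_length n w"
  unfolding acode_length_def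
proof (rule sum_nonneg)
  fix v assume "v \<in> {1..n}"
  then have "int (smaller_before v w) \<le> int v - 1"
    using smaller_before_le[OF assms, of v] by auto
  then show "0 \<le> acode_term v w"
    unfolding acode_term_def by simp
qed

section \<open>Left multiplication by the generators\<close>

definition swap_adj :: "nat \<Rightarrow> nat \<Rightarrow> nat" where
  "swap_adj i v = (if v = i then Suc i else if v = Suc i then i else v)"

definition swap_values :: "nat \<Rightarrow> cword \<Rightarrow> cword" where
  "swap_values i w = map (\<lambda>x. (swap_adj i (fst x), snd x)) w"

definition incr_color1 :: "nat \<Rightarrow> cword \<Rightarrow> cword" where
  "incr_color1 r w = map (\<lambda>x. (fst x, if fst x = 1 then (snd x + 1) mod r else snd x)) w"

definition decr_color1 :: "cword \<Rightarrow> cword" where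
  "decr_color1 w = map (\<lambda>x. (fst x, if fst x = 1 then snd x - 1 else snd x)) w"

lemma swap_adj_swap_adj [simp]: "swap_adj i (swap_adj i v) = v"
  unfolding swap_adj_def by auto

lemma swap_adj_eq_iff: "swap_adj i x = v \<longleftrightarrow> x = swap_adj i v"
  unfolding swap_adj_def by auto

lemma swap_adj_less_iff: "v \<noteq> i \<Longrightarrow> v \<noteq> Suc i \<Longrightarrow> swap_adj i x < v \<longleftrightarrow> x < v"
  unfolding swap_adj_def by auto

lemma swap_adj_image:
  assumes "1 \<le> i" "i < n"
  shows "swap_adj i ` {1..n} = {1..n}"
proof -
  have into: "swap_adj i v \<in> {1..n}" if "v \<in> {1..n}" for v
    using assms that unfolding swap_adj_def by auto
  then have "v \<in> swap_adj i ` {1..n}" if "v \<in> {1..n}" for v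
    using that by (metis imageI swap_adj_swap_adj)
  with into show ?thesis by blast
qed

lemma nth_geni: "v \<in> {1..n} \<Longrightarrow> geni n i ! (v - 1) = (swap_adj i v, 0)"
  unfolding geni_def swap_adj_def by (subst nth_map_upt) auto

lemma nth_gen0: "v \<in> {1..n} \<Longrightarrow> gen0 r n ! (v - 1) = (v, if v = 1 then 1 mod r else 0)"
  unfolding gen0_def by (subst nth_map_upt) auto

lemma cmult_geni:
  assumes "w \<in> G r n"
  shows "cmult r (geni n i) w = swap_values i w"
  unfolding cmult_def swap_values_def
proof (rule map_cong[OF refl])
  fix x assume "x \<in> set w"
  then have "fst x \<in> {1..n}" "snd x < r"
    using G_D(3,4)[OF assms] by auto
  then show "(fst (geni n i ! (fst x - 1)), (snd x + snd (geni n i ! (fst x - 1))) mod r)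
      = (swap_adj i (fst x), snd x)"
    using nth_geni[of "fst x" n i] by simp
qed

lemma cmult_gen0:
  assumes "w \<in> G r n"
  shows "cmult r (gen0 r n) w = incr_color1 r w"
  unfolding cmult_def incr_color1_def
proof (rule map_cong[OF refl])
  fix x assume "x \<in> set w"
  then have "fst x \<in> {1..n}" "snd x < r"
    using G_D(3,4)[OF assms] by auto
  then show "(fst (gen0 r n ! (fst x - 1)), (snd x + snd (gen0 r n ! (fst x - 1))) mod r)
      = (fst x, if fst x = 1 then (snd x + 1) mod r else snd x)"
    using nth_gen0[of "fst x" n r] by (simp add: mod_add_right_eq)
qed

lemma map_fst_swap_values: "map fst (swap_values i w) = map (swap_adj i) (map fst w)"
  unfolding swap_values_def by simp

lemma map_fst_incr_color1: "map fst (incr_color1 r w) = map fst w"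
  unfolding incr_color1_def by simp

lemma map_fst_decr_color1: "map fst (decr_color1 w) = map fst w"
  unfolding decr_color1_def by simp

lemma G_map_fst_cong:
  assumes "w \<in> G r n" "map fst w' = map fst w" "\<And>x. x \<in> set w' \<Longrightarrow> snd x < r"
  shows "w' \<in> G r n"
proof (rule G_I)
  show "length w' = n"
    using G_D(1)[OF assms(1)] length_map assms(2) by metis
  show "distinct (map fst w')" "fst ` set w' = {1..n}"
    using G_D(2,3)[OF assms(1)] assms(2) by (simp_all flip: set_map)
qed (fact assms(3))

lemma incr_color1_in_G:
  assumes "w \<in> G r n"
  shows "incr_color1 r w \<in> G r n"
  by (rule G_map_fst_cong[OF assms]) (auto simp: incr_color1_def dest: G_D(4)[OF assms])

lemma decr_color1_in_G:
  assumes "w \<in> G r n"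
  shows "decr_color1 w \<in> G r n"
  by (rule G_map_fst_cong[OF assms])
    (auto simp: decr_color1_def less_imp_diff_less dest: G_D(4)[OF assms])

lemma swap_values_in_G:
  assumes "w \<in> G r n" "1 \<le> i" "i < n"
  shows "swap_values i w \<in> G r n"
proof (rule G_I)
  have "inj (swap_adj i)"
    by (metis injI swap_adj_swap_adj)
  then show "distinct (map fst (swap_values i w))"
    using G_D(2)[OF assms(1)] unfolding map_fst_swap_values
    by (simp only: distinct_map[of "swap_adj i" "map fst w"]) (meson inj_on_subset subset_UNIV)
  have "fst ` set (swap_values i w) = swap_adj i ` fst ` set w"
    unfolding swap_values_def by (simp add: image_image)
  then show "fst ` set (swap_values i w) = {1..n}"
    using G_D(3)[OF assms(1)] swap_adj_image[OF assms(2,3)] by simp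
qed (use G_D[OF assms(1)] in \<open>auto simp: swap_values_def\<close>)

lemma cid_nth: "j < n \<Longrightarrow> cid n ! j = (Suc j, 0)"
  unfolding cid_def by (simp add: nth_map_upt del: upt_Suc)

lemma cid_in_G: "1 \<le> r \<Longrightarrow> cid n \<in> G r n"
  by (rule G_I) (auto simp: cid_def comp_def image_image)

lemma cmult_in_G:
  assumes "g \<in> gens r n" "w \<in> G r n"
  shows "cmult r g w \<in> G r n"
  using assms unfolding gens_def
  by (auto simp: cmult_gen0 cmult_geni incr_color1_in_G swap_values_in_G)

lemma foldr_cmult_in_G: "1 \<le> r \<Longrightarrow> set gs \<subseteq> gens r n \<Longrightarrow> foldr (cmult r) gs (cid n) \<in> G r n"
  by (induction gs) (auto simp: cid_in_G cmult_in_G)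

section \<open>Effect of a generator on the length formula\<close>

lemma position_swap_values: "position v (swap_values i w) = position (swap_adj i v) w"
  unfolding position_def swap_values_def takeWhile_map by (simp add: comp_def swap_adj_eq_iff)

lemma color_swap_values:
  "swap_adj i v \<in> fst ` set w \<Longrightarrow> color v (swap_values i w) = color (swap_adj i v) w"
  unfolding color_def position_swap_values
  using position_less_length[of "swap_adj i v" w] by (simp add: swap_values_def)

lemma smaller_before_swap_values:
  "smaller_before v (swap_values i w)
     = card {j. j < position (swap_adj i v) w \<and> swap_adj i (fst (w ! j)) < v}"
  unfolding smaller_before_card position_swap_values
  using position_le_length[of "swap_adj i v" w]
  by (intro arg_cong[where f=card]) (auto simp: swap_values_def)

lemma acode_term_swap_values_other:
  assumes "v \<in> fst ` set w" "v \<noteq> i" "v \<noteq> Suc i"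
  shows "acode_term v (swap_values i w) = acode_term v w"
proof -
  have fix_v: "swap_adj i v = v"
    using assms(2,3) unfolding swap_adj_def by simp
  have "smaller_before v (swap_values i w) = smaller_before v w"
    unfolding smaller_before_swap_values fix_v
    unfolding smaller_before_card
    using swap_adj_less_iff[OF assms(2,3)] by simp
  moreover have "color v (swap_values i w) = color v w"
    using color_swap_values[of i v w] fix_v assms(1) by simp
  ultimately show ?thesis
    unfolding acode_term_def by simp
qed

definition left_descent :: "nat \<Rightarrow> cword \<Rightarrow> bool" where
  "left_descent i w \<longleftrightarrow>
     (if position i w < position (Suc i) w then 0 < color (Suc i) w else color i w = 0)"

lemma acode_term_pair_swap_values:
  assumes "w \<in> G r n" "1 \<le> i" "i < n"
  shows "acode_term i (swap_values i w) + acode_term (Suc i) (swap_values i w)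
      = acode_term i w + acode_term (Suc i) w + (if left_descent i w then -1 else 1)"
proof -
  note w = G_D[OF assms(1)]
  define p where "p = position i w"
  define q where "q = position (Suc i) w"
  define A where "A = card {j. j < p \<and> fst (w ! j) < i}"
  define B where "B = card {j. j < q \<and> fst (w ! j) < i}"
  have i_in: "i \<in> fst ` set w" and Suc_i_in: "Suc i \<in> fst ` set w"
    using w(3) assms(2,3) by auto
  have "p \<noteq> q"
    using fst_nth_position[OF i_in] fst_nth_position[OF Suc_i_in] unfolding p_def q_def by force
  have swap_i: "swap_adj i i = Suc i" and swap_Suc_i: "swap_adj i (Suc i) = i"
    unfolding swap_adj_def by simp_all
  have less_Suc_i: "x < Suc i \<longleftrightarrow> x < i \<or> x = i" for x :: nat
    by auto
  have swap_less_i: "swap_adj i x < i \<longleftrightarrow> x < i" for x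
    unfolding swap_adj_def by auto
  have swap_less_Suc_i: "swap_adj i x < Suc i \<longleftrightarrow> x < i \<or> x = Suc i" for x
    unfolding swap_adj_def by auto
  have sb: "smaller_before i w = A"
    "smaller_before (Suc i) w = B + (if p < q then 1 else 0)"
    "smaller_before i (swap_values i w) = B"
    "smaller_before (Suc i) (swap_values i w) = A + (if q < p then 1 else 0)"
    unfolding smaller_before_swap_values swap_i swap_Suc_i
    unfolding smaller_before_card swap_less_i swap_less_Suc_i
    unfolding less_Suc_i A_def B_def p_def q_def
    using card_prefix_with_value[OF w(2) i_in position_le_length, of "\<lambda>x. x < i"]
      card_prefix_with_value[OF w(2) Suc_i_in position_le_length, of "\<lambda>x. x < i"]
    by simp_all
  have col: "color i (swap_values i w) = color (Suc i) w" "color (Suc i) (swap_values i w) = color i w"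
    using color_swap_values[of i i w] color_swap_values[of i "Suc i" w] i_in Suc_i_in
    by (simp_all add: swap_i swap_Suc_i)
  show ?thesis
    using \<open>p \<noteq> q\<close> unfolding acode_term_def sb col left_descent_def p_def[symmetric] q_def[symmetric]
    by auto
qed

lemma acode_length_swap_values:
  assumes "w \<in> G r n" "1 \<le> i" "i < n"
  shows "acode_length n (swap_values i w) = acode_length n w + (if left_descent i w then -1 else 1)"
proof -
  have split: "acode_length n u
      = acode_term i u + acode_term (Suc i) u + (\<Sum>v\<in>{1..n} - {i, Suc i}. acode_term v u)" for u
    unfolding acode_length_def using assms(2,3)
    by (subst sum.subset_diff[of "{i, Suc i}"]) auto
  have rest: "(\<Sum>v\<in>{1..n} - {i, Suc i}. acode_term v (swap_values i w))
      = (\<Sum>v\<in>{1..n} - {i, Suc i}. acode_term v w)"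
    using G_D(3)[OF assms(1)] by (intro sum.cong refl acode_term_swap_values_other) auto
  show ?thesis
    unfolding split[of "swap_values i w"] split[of w] acode_term_pair_swap_values[OF assms] rest
    by simp
qed

lemma color_incr_color1:
  assumes "v \<in> fst ` set w"
  shows "color v (incr_color1 r w) = (if v = 1 then (color 1 w + 1) mod r else color v w)"
  using position_less_length[OF assms] fst_nth_position[OF assms]
  unfolding color_def position_cong[OF map_fst_incr_color1] by (auto simp: incr_color1_def)

lemma acode_term_one:
  assumes "w \<in> G r n"
  shows "acode_term 1 w = int (color 1 w)"
proof -
  have "smaller_before 1 w = 0"
    unfolding smaller_before_def using G_D(3)[OF assms]
    by (force simp: filter_empty_conv dest: set_takeWhileD)
  then show ?thesis
    unfolding acode_term_def by simp
qed

lemma acode_length_incr_color1: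
  assumes "w \<in> G r n" "1 \<le> n"
  shows "acode_length n (incr_color1 r w) = acode_length n w - int (color 1 w) + int ((color 1 w + 1) mod r)"
proof -
  have split: "acode_length n u = acode_term 1 u + (\<Sum>v\<in>{1..n} - {1}. acode_term v u)" for u
    unfolding acode_length_def using assms(2) by (intro sum.remove) auto
  have "acode_term v (incr_color1 r w) = acode_term v w" if "v \<in> {1..n} - {1}" for v
    using that G_D(3)[OF assms(1)] color_incr_color1[of v w r]
    unfolding acode_term_def smaller_before_cong[OF map_fst_incr_color1] by simp
  moreover have "acode_term 1 (incr_color1 r w) = int ((color 1 w + 1) mod r)"
    using acode_term_one[OF incr_color1_in_G[OF assms(1)]] color_incr_color1[of 1 w r]
      G_D(3)[OF assms(1)] assms(2) by simp
  ultimately show ?thesis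
    unfolding split[of "incr_color1 r w"] split[of w] acode_term_one[OF assms(1)] by simp
qed

section \<open>The two bounds\<close>

lemma acode_length_cmult_le:
  assumes "g \<in> gens r n" "w \<in> G r n"
  shows "acode_length n (cmult r g w) \<le> acode_length n w + 1"
proof (cases "g = gen0 r n")
  case True
  show ?thesis
  proof (cases "n = 0")
    case True
    then show ?thesis by (simp add: acode_length_def)
  next
    case False
    have "(color 1 w + 1) mod r \<le> color 1 w + 1"
      by (rule mod_less_eq_dividend)
    moreover have "acode_length n (cmult r g w)
        = acode_length n w - int (color 1 w) + int ((color 1 w + 1) mod r)"
      using \<open>g = gen0 r n\<close> False by (simp add: cmult_gen0[OF assms(2)] acode_length_incr_color1[OF assms(2)])
    ultimately show ?thesis
      by linarith
  qed
next
  case False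
  then obtain i where "g = geni n i" "1 \<le> i" "i < n"
    using assms(1) unfolding gens_def by auto
  then show ?thesis
    using acode_length_swap_values[OF assms(2)] by (simp add: cmult_geni[OF assms(2)])
qed

lemma acode_length_cid: "acode_length n (cid n) = 0"
proof -
  have "acode_term v (cid n) = 0" if v: "v \<in> {1..n}" for v
  proof -
    have "v - 1 < n"
      using v by auto
    then have cid_v: "cid n ! (v - 1) = (v, 0)"
      using cid_nth v by simp
    have "distinct (map fst (cid n))" "v - 1 < length (cid n)"
      using v by (auto simp: cid_def comp_def)
    then have pos: "position v (cid n) = v - 1"
      using position_fst_nth cid_v by fastforce
    have "{j. j < v - 1 \<and> fst (cid n ! j) < v} = {..<v - 1}"
      using v cid_nth[of _ n] by auto
    then have "smaller_before v (cid n) = v - 1"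
      unfolding smaller_before_card pos by simp
    moreover have "color v (cid n) = 0"
      unfolding color_def pos cid_v by simp
    ultimately show ?thesis
      unfolding acode_term_def using v by simp
  qed
  then show ?thesis
    unfolding acode_length_def by simp
qed

lemma acode_length_foldr_le:
  assumes "1 \<le> r" "set gs \<subseteq> gens r n"
  shows "acode_length n (foldr (cmult r) gs (cid n)) \<le> int (length gs)"
  using assms(2)
proof (induction gs)
  case Nil
  then show ?case by (simp add: acode_length_cid)
next
  case (Cons g gs)
  have "foldr (cmult r) gs (cid n) \<in> G r n"
    using Cons.prems by (intro foldr_cmult_in_G[OF assms(1)]) simp
  then have "acode_length n (foldr (cmult r) (g # gs) (cid n))
      \<le> acode_length n (foldr (cmult r) gs (cid n)) + 1"
    using Cons.prems by (simp add: acode_length_cmult_le)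
  then show ?case
    using Cons by simp
qed

lemma sorted_G_eq_cid:
  assumes "w \<in> G r n" "sorted (map fst w)" "\<And>v. v \<in> {1..n} \<Longrightarrow> color v w = 0"
  shows "w = cid n"
proof -
  note w = G_D[OF assms(1)]
  have fst_w: "map fst w = [1..<n+1]"
    using assms(2) w(2,3) by (intro sorted_distinct_set_unique) (auto simp del: upt_Suc)
  show ?thesis
  proof (rule nth_equalityI)
    show "length w = length (cid n)"
      using w(1) by (simp add: cid_def)
  next
    fix j assume "j < length w"
    then have "j < n" "fst (w ! j) = Suc j" "w ! j \<in> set w"
      using w(1) fst_w nth_map[of j w fst] by (auto simp del: upt_Suc)
    moreover have "snd (w ! j) = 0"
      using color_fst[OF w(2) \<open>w ! j \<in> set w\<close>] assms(3) calculation by simp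
    ultimately show "w ! j = cid n ! j"
      by (simp add: cid_nth prod_eq_iff)
  qed
qed

lemma sorted_if_adjacent_positions_increase:
  assumes w: "w \<in> G r n"
    and adjacent: "\<And>i. 1 \<le> i \<Longrightarrow> i < n \<Longrightarrow> position i w < position (Suc i) w"
  shows "sorted (map fst w)"
  unfolding sorted_iff_nth_mono_less
proof (intro allI impI)
  have increasing: "position a w < position b w" if "1 \<le> a" "a < b" "b \<le> n" for a b
    using that(2,3)
  proof (induction b)
    case 0
    then show ?case by simp
  next
    case (Suc b)
    then show ?case
      using that(1) adjacent[of b] by (cases "a = b") auto
  qed
  fix j k assume jk: "j < k" "k < length (map fst w)"
  have in_range: "fst (w ! j) \<in> {1..n}" "fst (w ! k) \<in> {1..n}"
    using jk G_D(3)[OF w] by (force intro: nth_mem)+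
  show "map fst w ! j \<le> map fst w ! k"
  proof (rule ccontr)
    assume "\<not> map fst w ! j \<le> map fst w ! k"
    then have "position (fst (w ! k)) w < position (fst (w ! j)) w"
      using jk in_range by (intro increasing) auto
    then show False
      using jk position_fst_nth[OF G_D(2)[OF w]] by simp
  qed
qed

lemma no_left_descent_imp_cid:
  assumes w: "w \<in> G r n"
    and color_1: "1 \<le> n \<Longrightarrow> color 1 w = 0"
    and no_descent: "\<And>i. 1 \<le> i \<Longrightarrow> i < n \<Longrightarrow> \<not> left_descent i w"
  shows "w = cid n"
proof -
  have step: "position i w < position (Suc i) w \<and> color (Suc i) w = 0"
    if "1 \<le> i" "i < n" "color i w = 0" for i
    using no_descent[OF that(1,2)] that(3) unfolding left_descent_def by (auto split: if_splits)
  have color_0: "color v w = 0" if "1 \<le> v" "v \<le> n" for v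
    using that
  proof (induction v rule: nat_induct_at_least)
    case base
    then show ?case using color_1 by simp
  next
    case (Suc v)
    then show ?case using step[of v] by simp
  qed
  have "sorted (map fst w)"
    using w step color_0 by (intro sorted_if_adjacent_positions_increase) auto
  then show ?thesis
    using sorted_G_eq_cid[OF w] color_0 by auto
qed

lemma incr_decr_color1:
  assumes "w \<in> G r n" "0 < color 1 w"
  shows "incr_color1 r (decr_color1 w) = w"
  unfolding incr_color1_def decr_color1_def map_map
proof (rule map_idI)
  fix x assume x: "x \<in> set w"
  then have "fst x = 1 \<Longrightarrow> 0 < snd x \<and> snd x < r"
    using color_fst[OF G_D(2)[OF assms(1)] x] assms(2) G_D(4)[OF assms(1) x] by simp
  then show "((\<lambda>x. (fst x, if fst x = 1 then (snd x + 1) mod r else snd x)) \<circ>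
      (\<lambda>x. (fst x, if fst x = 1 then snd x - 1 else snd x))) x = x"
    by (auto simp: prod_eq_iff)
qed

lemma color_decr_color1:
  assumes "1 \<in> fst ` set w"
  shows "color 1 (decr_color1 w) = color 1 w - 1"
  using position_less_length[OF assms] fst_nth_position[OF assms]
  unfolding color_def position_cong[OF map_fst_decr_color1] by (simp add: decr_color1_def)

lemma exists_left_descent:
  assumes w: "w \<in> G r n" and "w \<noteq> cid n"
  shows "\<exists>g\<in>gens r n. \<exists>w'\<in>G r n. w = cmult r g w' \<and> acode_length n w' = acode_length n w - 1"
proof (cases "1 \<le> n \<and> 0 < color 1 w")
  case True
  define w' where "w' = decr_color1 w"
  have w': "w' \<in> G r n"
    unfolding w'_def using w by (rule decr_color1_in_G)
  have one: "1 \<in> fst ` set w"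
    using G_D(3)[OF w] True by simp
  have "color 1 w < r"
    using G_D(4)[OF w] position_less_length[OF one] unfolding color_def by simp
  then have "acode_length n w = acode_length n w' + 1"
    using acode_length_incr_color1[OF w'] incr_decr_color1[OF w] color_decr_color1[OF one] True
    unfolding w'_def by simp
  moreover have "w = cmult r (gen0 r n) w'"
    using cmult_gen0[OF w'] incr_decr_color1[OF w] True unfolding w'_def by simp
  ultimately show ?thesis
    using w' unfolding gens_def by force
next
  case False
  then obtain i where i: "1 \<le> i" "i < n" "left_descent i w"
    using no_left_descent_imp_cid[OF w] \<open>w \<noteq> cid n\<close> by auto
  define w' where "w' = swap_values i w"
  have w': "w' \<in> G r n"
    unfolding w'_def using swap_values_in_G[OF w i(1,2)] .
  have "swap_values i w' = w"
    unfolding w'_def swap_values_def by (simp add: map_idI)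
  then have "w = cmult r (geni n i) w'"
    using cmult_geni[OF w'] by simp
  moreover have "acode_length n w' = acode_length n w - 1"
    unfolding w'_def using acode_length_swap_values[OF w i(1,2)] i(3) by simp
  ultimately show ?thesis
    using w' i(1,2) unfolding gens_def by force
qed

lemma exists_factorization:
  assumes "1 \<le> r" "w \<in> G r n"
  shows "\<exists>gs. set gs \<subseteq> gens r n \<and> foldr (cmult r) gs (cid n) = w
           \<and> length gs = nat (acode_length n w)"
  using assms(2)
proof (induction "nat (acode_length n w)" arbitrary: w rule: less_induct)
  case less
  show ?case
  proof (cases "w = cid n")
    case True
    then show ?thesis
      by (intro exI[of _ "[]"]) (simp add: acode_length_cid)
  next
    case False
    then obtain g w' where g: "g \<in> gens r n" and w': "w' \<in> G r n" "w = cmult r g w'"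
      and shorter: "acode_length n w' = acode_length n w - 1"
      using exists_left_descent[OF less.prems] by blast
    have "0 \<le> acode_length n w'"
      using acode_length_nonneg[OF w'(1)] .
    then obtain gs where "set gs \<subseteq> gens r n" "foldr (cmult r) gs (cid n) = w'"
      "length gs = nat (acode_length n w')"
      using less.hyps[OF _ w'(1)] shorter by fastforce
    then show ?thesis
      using g w'(2) shorter \<open>0 \<le> acode_length n w'\<close> by (intro exI[of _ "g # gs"]) auto
  qed
qed

lemma clen_eq_acode_length:
  assumes "1 \<le> r" "w \<in> G r n"
  shows "int (clen r n w) = acode_length n w"
proof -
  obtain gs where gs: "set gs \<subseteq> gens r n" "foldr (cmult r) gs (cid n) = w"
      "length gs = nat (acode_length n w)"
    using exists_factorization[OF assms] by blast
  have "clen r n w = nat (acode_length n w)"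
    unfolding clen_def
  proof (rule Least_equality)
    show "\<exists>gs. length gs = nat (acode_length n w) \<and> set gs \<subseteq> gens r n \<and> foldr (cmult r) gs (cid n) = w"
      using gs by blast
  next
    fix k assume "\<exists>gs. length gs = k \<and> set gs \<subseteq> gens r n \<and> foldr (cmult r) gs (cid n) = w"
    then show "nat (acode_length n w) \<le> k"
      using acode_length_foldr_le[OF assms(1)] by fastforce
  qed
  then show ?thesis
    using acode_length_nonneg[OF assms(2)] by simp
qed

theorem lemma3p1:
  fixes r n :: nat and \<pi> :: cword
  assumes "1 \<le> r" and "\<pi> \<in> G r n"
  shows "int (clen r n \<pi>) =
    (\<Sum>i=1..n. let c = fst (acode \<pi> ! (i - 1)); e = snd (acode \<pi> ! (i - 1)) in
        int i - int c + (if e > 0 then 2 * (int c - 1) + int e else 0))"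
proof -
  have "acode_term i \<pi> = (let c = fst (acode \<pi> ! (i - 1)); e = snd (acode \<pi> ! (i - 1)) in
        int i - int c + (if e > 0 then 2 * (int c - 1) + int e else 0))" if "i \<in> {1..n}" for i
    using acode_nth[OF assms(2) that] unfolding acode_term_def by simp
  then show ?thesis
    using clen_eq_acode_length[OF assms] unfolding acode_length_def by simp
qed

end
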